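(* Let $P$ be an operad and $n\ge1$. The complex $(\Omega(PA),d)$ is exact, i.e. has zero cohomology in every degree.
   Context: All vector spaces over $\mathbb{Q}$. An operad consists of vector spaces $P[j]$ with $\Sigma_j$-actions, $P[0]=0$, with associative equivariant substitution and a unit (only the species structure is used below). Let $W$ be the super vector space with even basis $x_1,\dots,x_n$ and odd basis $dx_1,\dots,dx_n$. Set $\Omega(PA)=\bigoplus_{j\ge1}(P[j]\otimes W^{\otimes j})_{\Sigma_j}$, where $\Sigma_j$ acts on $W^{\otimes j}$ by permuting factors with the Koszul sign rule (transposing two odd factors gives a sign); it is $\mathbb{Z}$-graded by the number of odd factors, with $\Omega^0(PA)=PA=\bigoplus_{j\ge1}(P[j]\otimes V^{\otimes j})_{\Sigma_j}$, $V=\mathrm{span}(x_i)$. The differential is $d(p\otimes w_1\otimes\cdots\otimes w_j)=\sum_{k=1}^j(-1)^{\epsilon_k}\,p\otimes w_1\otimes\cdots\otimes d(w_k)\otimes\cdots\otimes w_j$, where $d(x_i)=dx_i$, $d(dx_i)=0$ and $\epsilon_k$ is the number of odd $w_l$ with $l<k$ (so $d$ is the odd superderivation of the free $P$-superalgebra with $d^2=0$). *)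

theory Defs
  imports Complex_Main "HOL-Combinatorics.Permutations"
begin

text \<open>Letters of the super vector space W: (i, False) is the even basis vector x_(i+1),
 (i, True) is the odd basis vector dx_(i+1), for i < n.  A word of length j is a basis
 tensor of W^{\<otimes>j}.  An element of the direct sum over j of P[j] \<otimes> W^{\<otimes>j}
 is represented by its coefficient function F, with F w \<in> P (length w),
 i.e. F = \<Sum>_w F w \<otimes> w.\<close>

type_synonym letter = "nat \<times> bool"
type_synonym 'a chain = "letter list \<Rightarrow> 'a"

definition odd_count :: "letter list \<Rightarrow> nat" where
  "odd_count w = length (filter snd w)"

definition species ::
  "(rat \<Rightarrow> 'a::ab_group_add \<Rightarrow> 'a) \<Rightarrow> (nat \<Rightarrow> 'a set) \<Rightarrow> (nat \<Rightarrow> (nat \<Rightarrow> nat) \<Rightarrow> 'a \<Rightarrow> 'a) \<Rightarrow> bool" where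
  "species scale P act \<longleftrightarrow>
     vector_space scale \<and>
     (\<forall>j. module.subspace scale (P j)) \<and>
     P 0 = {0} \<and>
     (\<forall>j \<sigma>. \<sigma> permutes {0..<j} \<longrightarrow>
        (\<forall>p\<in>P j. act j \<sigma> p \<in> P j) \<and>
        (\<forall>p\<in>P j. \<forall>q\<in>P j. act j \<sigma> (p + q) = act j \<sigma> p + act j \<sigma> q) \<and>
        (\<forall>c. \<forall>p\<in>P j. act j \<sigma> (scale c p) = scale c (act j \<sigma> p))) \<and>
     (\<forall>j. \<forall>p\<in>P j. act j id p = p) \<and>
     (\<forall>j \<sigma> \<tau>. \<sigma> permutes {0..<j} \<longrightarrow> \<tau> permutes {0..<j} \<longrightarrow>
        (\<forall>p\<in>P j. act j (\<sigma> \<circ> \<tau>) p = act j \<sigma> (act j \<tau> p)))"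

text \<open>Elements of \<Omega>-before-coinvariants: finitely supported, letters indexed below n.\<close>
definition is_chain :: "nat \<Rightarrow> (nat \<Rightarrow> 'a::zero set) \<Rightarrow> 'a chain \<Rightarrow> bool" where
  "is_chain n P F \<longleftrightarrow> finite {w. F w \<noteq> 0} \<and> (\<forall>w. F w \<in> P (length w)) \<and>
     (\<forall>w. F w \<noteq> 0 \<longrightarrow> (\<forall>l\<in>set w. fst l < n))"

definition chain_deg :: "nat \<Rightarrow> (nat \<Rightarrow> 'a::zero set) \<Rightarrow> nat \<Rightarrow> 'a chain set" where
  "chain_deg n P k = {F. is_chain n P F \<and> (\<forall>w. F w \<noteq> 0 \<longrightarrow> odd_count w = k)}"

text \<open>The differential: d(p \<otimes> w_1..w_j) = \<Sum>_k (-1)^{\<epsilon>_k} p \<otimes> w_1..d w_k..w_j,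
 written on coefficient functions: the coefficient of a word v collects, for every odd
 position k of v, the coefficient of v with that letter replaced by its even partner.\<close>
definition dR :: "('a::ab_group_add) chain \<Rightarrow> 'a chain" where
  "dR F v = (\<Sum>k\<in>{k. k < length v \<and> snd (v ! k)}.
      (if even (odd_count (take k v)) then F (v[k := (fst (v ! k), False)])
       else - F (v[k := (fst (v ! k), False)])))"

text \<open>Koszul sign of the left action of \<sigma> on the basis tensor w
 ((\<sigma>\<cdot>w)_(\<sigma> i) = w_i): parity of inversions of \<sigma> among odd positions.\<close>
definition koszul_odd :: "(nat \<Rightarrow> nat) \<Rightarrow> letter list \<Rightarrow> bool" where
  "koszul_odd \<sigma> w \<longleftrightarrow> odd (card {(a, b). a < b \<and> b < length w \<and> snd (w ! a) \<and> snd (w ! b) \<and> \<sigma> b < \<sigma> a})"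

text \<open>Diagonal action of \<sigma> on P[j] \<otimes> W^{\<otimes>j}:
 \<sigma>\<cdot>(p \<otimes> u) = \<plusminus> (\<sigma>\<cdot>p) \<otimes> (\<sigma>\<cdot>u); on coefficients, the coefficient of v = \<sigma>\<cdot>u
 where u_i = v_(\<sigma> i).\<close>
definition sact :: "(nat \<Rightarrow> (nat \<Rightarrow> nat) \<Rightarrow> 'a \<Rightarrow> 'a) \<Rightarrow> nat \<Rightarrow> (nat \<Rightarrow> nat) \<Rightarrow> ('a::ab_group_add) chain \<Rightarrow> 'a chain" where
  "sact act j \<sigma> F v =
     (if length v = j then
        (let u = map (\<lambda>i. v ! \<sigma> i) [0..<j] in
          if koszul_odd \<sigma> u then - act j \<sigma> (F u) else act j \<sigma> (F u))
      else 0)"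

text \<open>The subspace spanned by all x - \<sigma>\<cdot>x; \<Omega>(PA) is the quotient by it.\<close>
inductive_set coinv_rel :: "(rat \<Rightarrow> 'a::ab_group_add \<Rightarrow> 'a) \<Rightarrow> (nat \<Rightarrow> (nat \<Rightarrow> nat) \<Rightarrow> 'a \<Rightarrow> 'a) \<Rightarrow> nat \<Rightarrow> (nat \<Rightarrow> 'a set) \<Rightarrow> 'a chain set"
  for scale act n P where
  zero: "(\<lambda>_. 0) \<in> coinv_rel scale act n P"
| add: "F \<in> coinv_rel scale act n P \<Longrightarrow> G \<in> coinv_rel scale act n P \<Longrightarrow> (\<lambda>w. F w + G w) \<in> coinv_rel scale act n P"
| smult: "F \<in> coinv_rel scale act n P \<Longrightarrow> (\<lambda>w. scale c (F w)) \<in> coinv_rel scale act n P"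
| gen: "is_chain n P H \<Longrightarrow> (\<forall>w. H w \<noteq> 0 \<longrightarrow> length w = j) \<Longrightarrow> \<sigma> permutes {0..<j} \<Longrightarrow>
        (\<lambda>w. H w - sact act j \<sigma> H w) \<in> coinv_rel scale act n P"

end

theory Submission
  imports Defs
begin

text \<open>Let h be the contraction with the Euler vector field, the odd derivation sending
  dx_i to x_i, written on coefficients as euler_contraction.  Cartan's formula
  dh + hd = (number of letters) holds on every P[j] \<otimes> W^{\<otimes>j}: the terms in which
  d and h act on the same letter give the identity, and the mixed terms cancel in pairs
  by the Koszul sign rule.  Since h commutes with the signed action of \<Sigma>_j, it preserves
  the span of the relations x - \<sigma>\<cdot>x and so descends to \<Omega>(PA).  As P[0] = 0 and we work
  over \<rat>, dividing by the length shows that a cocycle F is cohomologous to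
  d(hF / length) modulo the relations.\<close>

section \<open>Signs and the positions of odd letters\<close>

definition signed :: "nat \<Rightarrow> 'a::ab_group_add \<Rightarrow> 'a" where
  "signed c x = (if even c then x else - x)"

lemma signed_signed [simp]: "signed a (signed b x) = signed (a + b) x"
  by (auto simp: signed_def)

lemma signed_add_self [simp]: "signed (a + a) x = x"
  by (simp add: signed_def)

lemma signed_zero [simp]: "signed a 0 = 0"
  by (simp add: signed_def)

lemma signed_add: "signed a (x + y) = signed a x + signed a y"
  by (simp add: signed_def)

lemma signed_diff: "signed a (x - y) = signed a x - signed a y"
  by (simp add: signed_def)

lemma signed_sum: "signed a (sum f A) = (\<Sum>x\<in>A. signed a (f x))"
  by (simp add: signed_def sum_negf)

lemma signed_cong: "even a = even b \<Longrightarrow> signed a x = signed b x"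
  by (simp add: signed_def)

lemma signed_add_signed_Suc: "signed c x + signed (Suc c) x = 0"
  by (simp add: signed_def)

definition odd_positions :: "letter list \<Rightarrow> nat set" where
  "odd_positions v = {k. k < length v \<and> snd (v ! k)}"

definition even_positions :: "letter list \<Rightarrow> nat set" where
  "even_positions v = {k. k < length v \<and> \<not> snd (v ! k)}"

definition make_odd :: "nat \<Rightarrow> letter list \<Rightarrow> letter list" where
  "make_odd k v = v[k := (fst (v ! k), True)]"

definition make_even :: "nat \<Rightarrow> letter list \<Rightarrow> letter list" where
  "make_even k v = v[k := (fst (v ! k), False)]"

abbreviation odd_before :: "nat \<Rightarrow> letter list \<Rightarrow> nat" where
  "odd_before k v \<equiv> odd_count (take k v)"

lemma finite_odd_positions [simp]: "finite (odd_positions v)"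
  and finite_even_positions [simp]: "finite (even_positions v)"
  by (auto simp: odd_positions_def even_positions_def)

lemma odd_even_positions_disjoint: "odd_positions v \<inter> even_positions v = {}"
  by (auto simp: odd_positions_def even_positions_def)

lemma odd_even_positions_Un: "odd_positions v \<union> even_positions v = {..<length v}"
  by (auto simp: odd_positions_def even_positions_def)

lemma length_make_odd [simp]: "length (make_odd k v) = length v"
  and length_make_even [simp]: "length (make_even k v) = length v"
  by (simp_all add: make_odd_def make_even_def)

lemma map_fst_make_odd [simp]: "map fst (make_odd k v) = map fst v"
proof (cases "k < length v")
  case True
  then have "fst (v ! k) = map fst v ! k"
    by simp
  then show ?thesis
    unfolding make_odd_def map_update list_update_id by simp
qed (simp add: make_odd_def list_update_beyond)

lemma odd_positions_make_odd:
  "k \<in> even_positions v \<Longrightarrow> odd_positions (make_odd k v) = insert k (odd_positions v)"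
  by (auto simp: odd_positions_def even_positions_def make_odd_def nth_list_update)

lemma even_positions_make_even:
  "k \<in> odd_positions v \<Longrightarrow> even_positions (make_even k v) = insert k (even_positions v)"
  by (auto simp: odd_positions_def even_positions_def make_even_def nth_list_update)

lemma mem_even_positions_make_even:
  "k \<in> odd_positions v \<Longrightarrow> k \<in> even_positions (make_even k v)"
  by (simp add: even_positions_make_even)

lemma make_even_make_odd [simp]: "k \<in> even_positions v \<Longrightarrow> make_even k (make_odd k v) = v"
  by (cases "v ! k") (auto simp: even_positions_def make_even_def make_odd_def list_update_same_conv)

lemma make_odd_make_even [simp]: "k \<in> odd_positions v \<Longrightarrow> make_odd k (make_even k v) = v"
  by (cases "v ! k") (auto simp: odd_positions_def make_even_def make_odd_def list_update_same_conv)

lemma make_odd_make_even_swap: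
  "k \<noteq> m \<Longrightarrow> make_odd m (make_even k v) = make_even k (make_odd m v)"
  by (simp add: make_odd_def make_even_def nth_list_update list_update_swap)

lemma dR_altdef: "dR F v = (\<Sum>k\<in>odd_positions v. signed (odd_before k v) (F (make_even k v)))"
  by (simp add: dR_def odd_positions_def signed_def make_even_def)

lemma odd_before_card: "odd_before k v = card {t \<in> odd_positions v. t < k}"
  by (auto simp: odd_count_def length_filter_conv_card odd_positions_def intro!: arg_cong[where f = card])

lemma odd_before_make_odd:
  assumes "m \<in> even_positions v"
  shows "odd_before k (make_odd m v) = odd_before k v + (if m < k then 1 else 0)"
proof -
  have "m \<notin> odd_positions v"
    using assms odd_even_positions_disjoint by blast
  moreover have "{t \<in> insert m (odd_positions v). t < k} =
      (if m < k then insert m {t \<in> odd_positions v. t < k} else {t \<in> odd_positions v. t < k})"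
    by auto
  ultimately show ?thesis
    unfolding odd_before_card odd_positions_make_odd[OF assms] by simp
qed

lemma odd_before_make_even:
  assumes "k \<in> odd_positions v"
  shows "odd_before m (make_even k v) + (if k < m then 1 else 0) = odd_before m v"
  using odd_before_make_odd[OF mem_even_positions_make_even[OF assms], of m] assms by simp

lemma odd_count_make_odd: "m \<in> even_positions v \<Longrightarrow> odd_count (make_odd m v) = Suc (odd_count v)"
  using odd_before_make_odd[of m v "length v"] by (simp add: even_positions_def)

section \<open>Cartan's formula\<close>

definition euler_contraction :: "('a::ab_group_add) chain \<Rightarrow> 'a chain" where
  "euler_contraction F v = (\<Sum>k\<in>even_positions v. signed (odd_before k v) (F (make_odd k v)))"

lemma dR_euler_contraction_expand:
  "dR (euler_contraction F) v = (\<Sum>k\<in>odd_positions v. F v + (\<Sum>m\<in>even_positions v.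
      signed (odd_before k v + odd_before m (make_even k v)) (F (make_odd m (make_even k v)))))"
  unfolding dR_altdef[of _ v]
proof (rule sum.cong[OF refl])
  fix k assume k: "k \<in> odd_positions v"
  have "k \<notin> even_positions v"
    using k odd_even_positions_disjoint by blast
  then have "euler_contraction F (make_even k v) =
      signed (odd_before k (make_even k v)) (F (make_odd k (make_even k v))) +
      (\<Sum>m\<in>even_positions v. signed (odd_before m (make_even k v)) (F (make_odd m (make_even k v))))"
    unfolding euler_contraction_def even_positions_make_even[OF k] by simp
  moreover have "odd_before k (make_even k v) = odd_before k v"
    using odd_before_make_even[OF k, of k] by simp
  ultimately show "signed (odd_before k v) (euler_contraction F (make_even k v)) = F v + (\<Sum>m\<in>even_positions v.
      signed (odd_before k v + odd_before m (make_even k v)) (F (make_odd m (make_even k v))))"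
    using k by (simp add: signed_add signed_sum)
qed

lemma euler_contraction_dR_expand:
  "euler_contraction (dR F) v = (\<Sum>m\<in>even_positions v. F v + (\<Sum>k\<in>odd_positions v.
      signed (odd_before m v + odd_before k (make_odd m v)) (F (make_even k (make_odd m v)))))"
  unfolding euler_contraction_def[of _ v]
proof (rule sum.cong[OF refl])
  fix m assume m: "m \<in> even_positions v"
  have "m \<notin> odd_positions v"
    using m odd_even_positions_disjoint by blast
  then have "dR F (make_odd m v) =
      signed (odd_before m (make_odd m v)) (F (make_even m (make_odd m v))) +
      (\<Sum>k\<in>odd_positions v. signed (odd_before k (make_odd m v)) (F (make_even k (make_odd m v))))"
    unfolding dR_altdef[of _ "make_odd m v"] odd_positions_make_odd[OF m] by simp
  moreover have "odd_before m (make_odd m v) = odd_before m v"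
    using odd_before_make_odd[OF m, of m] by simp
  ultimately show "signed (odd_before m v) (dR F (make_odd m v)) = F v + (\<Sum>k\<in>odd_positions v.
      signed (odd_before m v + odd_before k (make_odd m v)) (F (make_even k (make_odd m v))))"
    using m by (simp add: signed_add signed_sum)
qed

text \<open>Moving the letter at k to the even side shifts the sign of the position m exactly
  when k < m, and moving the letter at m to the odd side shifts the sign of k exactly
  when m < k; as k \<noteq> m, exactly one shift occurs.\<close>
lemma mixed_terms_cancel:
  assumes k: "k \<in> odd_positions v" and m: "m \<in> even_positions v"
  shows "signed (odd_before k v + odd_before m (make_even k v)) x +
         signed (odd_before m v + odd_before k (make_odd m v)) x = 0"
proof -
  have before_m: "odd_before m (make_even k v) + (if k < m then 1 else 0) = odd_before m v"
    by (rule odd_before_make_even[OF k])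
  have before_k: "odd_before k (make_odd m v) = odd_before k v + (if m < k then 1 else 0)"
    by (rule odd_before_make_odd[OF m])
  show ?thesis
  proof (cases "k < m")
    case True
    then have "odd_before m v = Suc (odd_before m (make_even k v))"
      and "odd_before k (make_odd m v) = odd_before k v"
      using before_m before_k by simp_all
    then show ?thesis
      using signed_add_signed_Suc[of "odd_before k v + odd_before m (make_even k v)" x] by (simp add: ac_simps)
  next
    case False
    have "k \<noteq> m"
      using k m odd_even_positions_disjoint by blast
    with False have "odd_before m (make_even k v) = odd_before m v"
      and "odd_before k (make_odd m v) = Suc (odd_before k v)"
      using before_m before_k by simp_all
    then show ?thesis
      using signed_add_signed_Suc[of "odd_before k v + odd_before m v" x] by (simp add: ac_simps)
  qed
qed

theorem cartan_formula:
  "dR (euler_contraction F) v + euler_contraction (dR F) v = (\<Sum>k<length v. F v)"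
proof -
  let ?O = "odd_positions v" and ?E = "even_positions v"
  define mixed where "mixed k m =
      signed (odd_before k v + odd_before m (make_even k v)) (F (make_odd m (make_even k v))) +
      signed (odd_before m v + odd_before k (make_odd m v)) (F (make_even k (make_odd m v)))" for k m
  have "mixed k m = 0" if "k \<in> ?O" "m \<in> ?E" for k m
  proof -
    have "k \<noteq> m"
      using that odd_even_positions_disjoint by blast
    show ?thesis
      unfolding mixed_def make_odd_make_even_swap[OF \<open>k \<noteq> m\<close>] by (rule mixed_terms_cancel[OF that])
  qed
  then have "(\<Sum>k\<in>?O. \<Sum>m\<in>?E. mixed k m) = 0"
    by simp
  moreover have "dR (euler_contraction F) v + euler_contraction (dR F) v =
      (\<Sum>k\<in>?O. F v) + (\<Sum>m\<in>?E. F v) + (\<Sum>k\<in>?O. \<Sum>m\<in>?E. mixed k m)"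
    unfolding dR_euler_contraction_expand euler_contraction_dR_expand mixed_def sum.distrib
    by (simp add: sum.swap[of _ ?E] ac_simps)
  ultimately show ?thesis
    using odd_even_positions_disjoint odd_even_positions_Un
    by (simp add: sum.union_disjoint[symmetric])
qed

section \<open>Koszul signs of permutations\<close>

definition permute_word :: "(nat \<Rightarrow> nat) \<Rightarrow> nat \<Rightarrow> letter list \<Rightarrow> letter list" where
  "permute_word \<sigma> j v = map (\<lambda>i. v ! \<sigma> i) [0..<j]"

definition odd_inversions :: "(nat \<Rightarrow> nat) \<Rightarrow> letter list \<Rightarrow> (nat \<times> nat) set" where
  "odd_inversions \<sigma> w =
     {(a, b). a < b \<and> b < length w \<and> snd (w ! a) \<and> snd (w ! b) \<and> \<sigma> b < \<sigma> a}"

lemma length_permute_word [simp]: "length (permute_word \<sigma> j v) = j"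
  by (simp add: permute_word_def)

lemma nth_permute_word [simp]: "i < j \<Longrightarrow> permute_word \<sigma> j v ! i = v ! \<sigma> i"
  by (simp add: permute_word_def)

lemma sact_altdef:
  "length w = j \<Longrightarrow> sact act j \<sigma> G w =
     signed (card (odd_inversions \<sigma> (permute_word \<sigma> j w))) (act j \<sigma> (G (permute_word \<sigma> j w)))"
  by (simp add: sact_def Let_def koszul_odd_def odd_inversions_def signed_def permute_word_def)

lemma odd_inversions_altdef:
  "odd_inversions \<sigma> w = {(a, b). a \<in> odd_positions w \<and> b \<in> odd_positions w \<and> a < b \<and> \<sigma> b < \<sigma> a}"
  by (auto simp: odd_inversions_def odd_positions_def)

lemma odd_inversions_make_odd:
  assumes "m \<in> even_positions w"
  shows "odd_inversions \<sigma> (make_odd m w) = odd_inversions \<sigma> w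
     \<union> (\<lambda>a. (a, m)) ` {a \<in> odd_positions w. a < m \<and> \<sigma> m < \<sigma> a}
     \<union> (\<lambda>b. (m, b)) ` {b \<in> odd_positions w. m < b \<and> \<sigma> b < \<sigma> m}"
  unfolding odd_inversions_altdef odd_positions_make_odd[OF assms] by auto

lemma card_odd_inversions_make_odd:
  assumes m: "m \<in> even_positions w"
  shows "card (odd_inversions \<sigma> (make_odd m w)) = card (odd_inversions \<sigma> w)
     + card {a \<in> odd_positions w. a < m \<and> \<sigma> m < \<sigma> a}
     + card {b \<in> odd_positions w. m < b \<and> \<sigma> b < \<sigma> m}"
proof -
  have "m \<notin> odd_positions w"
    using m odd_even_positions_disjoint by blast
  moreover have "finite (odd_inversions \<sigma> w)"
    by (rule finite_subset[of _ "odd_positions w \<times> odd_positions w"]) (auto simp: odd_inversions_altdef)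
  ultimately show ?thesis
    unfolding odd_inversions_make_odd[OF m]
    by (subst card_Un_disjoint card_image; auto simp: odd_inversions_altdef inj_on_def)+
qed

lemma even_card_Diff_add_Diff:
  assumes "finite A" "finite B"
  shows "even (card (A - B) + card (B - A)) = even (card A + card B)"
proof -
  have "card A + card B = 2 * card (A \<inter> B) + (card (A - B) + card (B - A))"
    using card_Int_Diff[OF assms(1), of B] card_Int_Diff[OF assms(2), of A] by (simp add: Int_commute)
  then show ?thesis
    by simp
qed

lemma positions_permute_word:
  assumes "\<sigma> permutes {0..<j}" and "length v = j"
  shows "{k. k < length v \<and> Q (v ! k)} = \<sigma> ` {i. i < j \<and> Q (permute_word \<sigma> j v ! i)}"
proof -
  have "\<sigma> ` {i. i < j \<and> Q (permute_word \<sigma> j v ! i)} = \<sigma> ` {i \<in> {0..<j}. Q (v ! \<sigma> i)}"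
    by auto
  also have "\<dots> = {k \<in> \<sigma> ` {0..<j}. Q (v ! k)}"
    by auto
  also have "\<sigma> ` {0..<j} = {0..<j}"
    by (rule permutes_image[OF assms(1)])
  finally show ?thesis
    using assms(2) by auto
qed

lemma odd_positions_permute_word:
  "\<sigma> permutes {0..<j} \<Longrightarrow> length v = j \<Longrightarrow> odd_positions v = \<sigma> ` odd_positions (permute_word \<sigma> j v)"
  unfolding odd_positions_def length_permute_word by (rule positions_permute_word)

lemma even_positions_permute_word:
  "\<sigma> permutes {0..<j} \<Longrightarrow> length v = j \<Longrightarrow> even_positions v = \<sigma> ` even_positions (permute_word \<sigma> j v)"
  unfolding even_positions_def length_permute_word by (rule positions_permute_word)

lemma odd_before_permute_word:
  assumes "\<sigma> permutes {0..<j}" and "length v = j"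
  shows "odd_before (\<sigma> k) v = card {i \<in> odd_positions (permute_word \<sigma> j v). \<sigma> i < \<sigma> k}"
proof -
  have "{t \<in> odd_positions v. t < \<sigma> k} = \<sigma> ` {i \<in> odd_positions (permute_word \<sigma> j v). \<sigma> i < \<sigma> k}"
    unfolding odd_positions_permute_word[OF assms] by auto
  then show ?thesis
    using permutes_inj[OF assms(1)] by (simp add: odd_before_card card_image inj_on_subset)
qed

text \<open>The Koszul sign of \<sigma> changes, when the letter at m becomes odd, by the
  number of odd letters whose order relative to m is reversed by \<sigma>; modulo 2 this
  is the discrepancy between the odd letters before m and those before \<sigma> m.\<close>
lemma koszul_sign_make_odd:
  assumes s: "\<sigma> permutes {0..<j}" and v: "length v = j"
    and m: "m \<in> even_positions (permute_word \<sigma> j v)"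
  shows "even (odd_before (\<sigma> m) v + card (odd_inversions \<sigma> (make_odd m (permute_word \<sigma> j v)))) =
         even (card (odd_inversions \<sigma> (permute_word \<sigma> j v)) + odd_before m (permute_word \<sigma> j v))"
proof -
  define u where "u = permute_word \<sigma> j v"
  define A where "A = {i \<in> odd_positions u. \<sigma> i < \<sigma> m}"
  define B where "B = {i \<in> odd_positions u. i < m}"
  have "m \<notin> odd_positions u"
    using m odd_even_positions_disjoint unfolding u_def by blast
  then have "i \<noteq> m \<and> \<sigma> i \<noteq> \<sigma> m" if "i \<in> odd_positions u" for i
    using that permutes_inj[OF s] by (metis inj_eq)
  then have "{a \<in> odd_positions u. a < m \<and> \<sigma> m < \<sigma> a} = B - A"
    and "{b \<in> odd_positions u. m < b \<and> \<sigma> b < \<sigma> m} = A - B"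
    unfolding A_def B_def by (auto simp: linorder_neq_iff)
  then have "card (odd_inversions \<sigma> (make_odd m u)) = card (odd_inversions \<sigma> u) + card (B - A) + card (A - B)"
    using card_odd_inversions_make_odd[OF m[folded u_def]] by simp
  moreover have "odd_before (\<sigma> m) v = card A"
    unfolding A_def u_def by (rule odd_before_permute_word[OF s v])
  moreover have "odd_before m u = card B"
    unfolding B_def by (rule odd_before_card)
  moreover have "even (card (A - B) + card (B - A)) = even (card A + card B)"
    by (rule even_card_Diff_add_Diff) (simp_all add: A_def B_def)
  ultimately show ?thesis
    unfolding u_def[symmetric] by presburger
qed

lemma permute_word_make_odd:
  assumes s: "\<sigma> permutes {0..<j}" and v: "length v = j" and m: "m < j"
  shows "permute_word \<sigma> j (make_odd (\<sigma> m) v) = make_odd m (permute_word \<sigma> j v)"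
proof (rule nth_equalityI)
  fix i assume "i < length (permute_word \<sigma> j (make_odd (\<sigma> m) v))"
  then have i: "i < j"
    by simp
  have "\<sigma> i = \<sigma> m \<longleftrightarrow> i = m"
    using permutes_inj[OF s] by (auto dest: injD)
  moreover have "\<sigma> i < j"
    using permutes_in_image[OF s, of i] i by simp
  ultimately show "permute_word \<sigma> j (make_odd (\<sigma> m) v) ! i = make_odd m (permute_word \<sigma> j v) ! i"
    using i v m by (auto simp: make_odd_def nth_list_update)
qed simp

section \<open>Passage to coinvariants\<close>

lemma euler_contraction_nonzeroD:
  "euler_contraction F v \<noteq> 0 \<Longrightarrow> \<exists>k\<in>even_positions v. F (make_odd k v) \<noteq> 0"
  unfolding euler_contraction_def by (metis (no_types, lifting) signed_zero sum.neutral)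

lemma euler_contraction_chain_deg_0:
  assumes "F \<in> chain_deg n P 0"
  shows "euler_contraction F v = 0"
proof (rule ccontr)
  assume "euler_contraction F v \<noteq> 0"
  then obtain k where "k \<in> even_positions v" "F (make_odd k v) \<noteq> 0"
    using euler_contraction_nonzeroD by blast
  then show False
    using assms odd_count_make_odd by (fastforce simp: chain_deg_def)
qed

locale species_structure =
  fixes scale :: "rat \<Rightarrow> 'a::ab_group_add \<Rightarrow> 'a"
    and P :: "nat \<Rightarrow> 'a set"
    and act :: "nat \<Rightarrow> (nat \<Rightarrow> nat) \<Rightarrow> 'a \<Rightarrow> 'a"
  assumes species: "species scale P act"
begin

sublocale vector_space scale
  using species by (simp add: species_def)

lemma subspace_P: "subspace (P j)"
  using species by (simp add: species_def)

lemma P_0: "P 0 = {0}"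
  using species by (simp add: species_def)

lemma signed_mem: "p \<in> P j \<Longrightarrow> signed c p \<in> P j"
  using subspace_neg[OF subspace_P] by (simp add: signed_def)

lemma signed_scale: "signed a (scale c x) = scale c (signed a x)"
  by (simp add: signed_def)

context
  fixes \<sigma> :: "nat \<Rightarrow> nat" and j :: nat
  assumes \<sigma>: "\<sigma> permutes {0..<j}"
begin

lemma act_add: "p \<in> P j \<Longrightarrow> q \<in> P j \<Longrightarrow> act j \<sigma> (p + q) = act j \<sigma> p + act j \<sigma> q"
  using species \<sigma> by (simp add: species_def)

lemma act_zero: "act j \<sigma> 0 = 0"
  using act_add[of 0 0] subspace_0[OF subspace_P] by simp

lemma act_minus: "p \<in> P j \<Longrightarrow> act j \<sigma> (- p) = - act j \<sigma> p"
  using act_add[of p "- p"] act_zero subspace_neg[OF subspace_P] by (simp add: eq_neg_iff_add_eq_0 add.commute)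

lemma act_signed: "p \<in> P j \<Longrightarrow> act j \<sigma> (signed c p) = signed c (act j \<sigma> p)"
  by (simp add: signed_def act_minus)

lemma act_sum: "(\<And>x. x \<in> A \<Longrightarrow> f x \<in> P j) \<Longrightarrow> act j \<sigma> (sum f A) = (\<Sum>x\<in>A. act j \<sigma> (f x))"
proof (induction A rule: infinite_finite_induct)
  case (insert x A)
  then show ?case
    using act_add subspace_sum[OF subspace_P, of A f] by simp
qed (simp_all add: act_zero)

lemma euler_contraction_sact:
  assumes H: "\<And>u. length u = j \<Longrightarrow> H u \<in> P j"
  shows "euler_contraction (sact act j \<sigma> H) v = sact act j \<sigma> (euler_contraction H) v"
proof (cases "length v = j")
  case False
  then show ?thesis
    by (simp add: euler_contraction_def sact_def)
next
  case v: True
  define u where "u = permute_word \<sigma> j v"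
  have "euler_contraction (sact act j \<sigma> H) v =
      (\<Sum>m\<in>even_positions u. signed (odd_before (\<sigma> m) v) (sact act j \<sigma> H (make_odd (\<sigma> m) v)))"
    unfolding euler_contraction_def even_positions_permute_word[OF \<sigma> v] u_def
    by (rule sum.reindex[OF inj_on_subset[OF permutes_inj[OF \<sigma>]], simplified])
  also have "\<dots> = (\<Sum>m\<in>even_positions u.
      signed (card (odd_inversions \<sigma> u) + odd_before m u) (act j \<sigma> (H (make_odd m u))))"
  proof (rule sum.cong[OF refl])
    fix m assume m: "m \<in> even_positions u"
    then have "m < j"
      by (simp add: even_positions_def u_def)
    then have "sact act j \<sigma> H (make_odd (\<sigma> m) v) =
        signed (card (odd_inversions \<sigma> (make_odd m u))) (act j \<sigma> (H (make_odd m u)))"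
      using sact_altdef[of "make_odd (\<sigma> m) v" j act \<sigma> H] permute_word_make_odd[OF \<sigma> v] v
      by (simp add: u_def)
    then have "signed (odd_before (\<sigma> m) v) (sact act j \<sigma> H (make_odd (\<sigma> m) v)) =
        signed (odd_before (\<sigma> m) v + card (odd_inversions \<sigma> (make_odd m u))) (act j \<sigma> (H (make_odd m u)))"
      by simp
    also have "\<dots> = signed (card (odd_inversions \<sigma> u) + odd_before m u) (act j \<sigma> (H (make_odd m u)))"
      by (rule signed_cong) (use koszul_sign_make_odd[OF \<sigma> v m[unfolded u_def]] in \<open>simp add: u_def\<close>)
    finally show "signed (odd_before (\<sigma> m) v) (sact act j \<sigma> H (make_odd (\<sigma> m) v)) =
        signed (card (odd_inversions \<sigma> u) + odd_before m u) (act j \<sigma> (H (make_odd m u)))" .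
  qed
  also have "\<dots> = signed (card (odd_inversions \<sigma> u)) (act j \<sigma> (euler_contraction H u))"
    using H by (simp add: euler_contraction_def act_sum signed_mem act_signed signed_sum u_def)
  also have "\<dots> = sact act j \<sigma> (euler_contraction H) v"
    using sact_altdef[OF v, of act \<sigma> "euler_contraction H"] by (simp add: u_def)
  finally show ?thesis .
qed

end

lemma sum_lessThan_const_eq_scale: "(\<Sum>k<m. x) = scale (of_nat m) x"
  by (induction m) (simp_all add: scale_left_distrib)

lemma is_chain_euler_contraction:
  assumes F: "is_chain n P F"
  shows "is_chain n P (euler_contraction F)"
  unfolding is_chain_def
proof (intro conjI allI impI ballI)
  have "{v. euler_contraction F v \<noteq> 0} \<subseteq> (\<Union>w\<in>{w. F w \<noteq> 0}. (\<lambda>k. make_even k w) ` {..<length w})"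
  proof
    fix v assume "v \<in> {v. euler_contraction F v \<noteq> 0}"
    then obtain k where k: "k \<in> even_positions v" "F (make_odd k v) \<noteq> 0"
      using euler_contraction_nonzeroD by blast
    then have "v = make_even k (make_odd k v)" and "k < length (make_odd k v)"
      by (simp_all add: even_positions_def)
    with k show "v \<in> (\<Union>w\<in>{w. F w \<noteq> 0}. (\<lambda>k. make_even k w) ` {..<length w})"
      by blast
  qed
  then show "finite {v. euler_contraction F v \<noteq> 0}"
    by (rule finite_subset) (use F in \<open>simp add: is_chain_def\<close>)
next
  fix v
  have "F (make_odd k v) \<in> P (length v)" for k
    using F length_make_odd unfolding is_chain_def by metis
  then show "euler_contraction F v \<in> P (length v)"
    unfolding euler_contraction_def by (intro subspace_sum[OF subspace_P] signed_mem)
next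
  fix v l assume "euler_contraction F v \<noteq> 0" "l \<in> set v"
  then obtain k where "F (make_odd k v) \<noteq> 0"
    using euler_contraction_nonzeroD by blast
  then have "\<forall>l\<in>set (make_odd k v). fst l < n"
    using F by (simp add: is_chain_def)
  moreover have "fst l \<in> fst ` set (make_odd k v)"
    using \<open>l \<in> set v\<close> map_fst_make_odd[of k v] by (metis image_eqI list.set_map)
  ultimately show "fst l < n"
    by force
qed

lemma euler_contraction_chain_deg:
  assumes F: "F \<in> chain_deg n P k"
  shows "euler_contraction F \<in> chain_deg n P (k - 1)"
proof -
  have "odd_count v = k - 1" if nonzero: "euler_contraction F v \<noteq> 0" for v
  proof -
    obtain m where "m \<in> even_positions v" "F (make_odd m v) \<noteq> 0"
      using euler_contraction_nonzeroD[OF nonzero] by blast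
    then show ?thesis
      using F odd_count_make_odd by (fastforce simp: chain_deg_def)
  qed
  then show ?thesis
    using F is_chain_euler_contraction by (simp add: chain_deg_def)
qed

lemma chain_deg_scale_by_length:
  assumes "F \<in> chain_deg n P k"
  shows "(\<lambda>v. scale (c (length v)) (F v)) \<in> chain_deg n P k"
  using assms subspace_scale[OF subspace_P] by (fastforce simp: chain_deg_def is_chain_def elim: finite_subset[rotated])

lemma coinv_rel_scale_by_length:
  assumes "X \<in> coinv_rel scale act n P"
  shows "(\<lambda>v. scale (c (length v)) (X v)) \<in> coinv_rel scale act n P"
  using assms
proof (induction rule: coinv_rel.induct)
  case zero
  then show ?case
    by (simp add: coinv_rel.zero)
next
  case (add F G)
  then show ?case
    using coinv_rel.add[OF add.IH] by (simp add: scale_right_distrib)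
next
  case (smult F c')
  then show ?case
    using coinv_rel.smult[OF smult.IH, of c'] by (simp add: scale_left_commute mult.commute)
next
  case (gen H j \<sigma>)
  text \<open>A generator is concentrated in length j, so the factor is the constant c j.\<close>
  have "(\<lambda>v. scale (c (length v)) (H v - sact act j \<sigma> H v)) = (\<lambda>v. scale (c j) (H v - sact act j \<sigma> H v))"
    using gen.hyps(2) by (auto simp: fun_eq_iff sact_def)
  then show ?case
    using coinv_rel.smult[OF coinv_rel.gen[OF gen.hyps]] by simp
qed

lemma coinv_rel_euler_contraction:
  assumes "X \<in> coinv_rel scale act n P"
  shows "euler_contraction X \<in> coinv_rel scale act n P"
  using assms
proof (induction rule: coinv_rel.induct)
  case zero
  then show ?case
    using coinv_rel.zero by (simp add: euler_contraction_def)
next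
  case (add F G)
  have "euler_contraction (\<lambda>w. F w + G w) = (\<lambda>w. euler_contraction F w + euler_contraction G w)"
    by (simp add: euler_contraction_def fun_eq_iff signed_add sum.distrib)
  then show ?case
    using coinv_rel.add[OF add.IH] by simp
next
  case (smult F c)
  have "euler_contraction (\<lambda>w. scale c (F w)) = (\<lambda>w. scale c (euler_contraction F w))"
    by (simp add: euler_contraction_def fun_eq_iff signed_scale scale_sum_right)
  then show ?case
    using coinv_rel.smult[OF smult.IH] by simp
next
  case (gen H j \<sigma>)
  have "H u \<in> P j" if "length u = j" for u
    using gen.hyps(1) that by (auto simp: is_chain_def)
  then have "euler_contraction (\<lambda>w. H w - sact act j \<sigma> H w) =
      (\<lambda>w. euler_contraction H w - sact act j \<sigma> (euler_contraction H) w)"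
    using euler_contraction_sact[OF gen.hyps(3)]
    by (simp add: euler_contraction_def fun_eq_iff signed_diff sum_subtractf)
  moreover have "\<forall>w. euler_contraction H w \<noteq> 0 \<longrightarrow> length w = j"
    using gen.hyps(2) euler_contraction_nonzeroD by fastforce
  ultimately show ?case
    using coinv_rel.gen[OF is_chain_euler_contraction[OF gen.hyps(1)] _ gen.hyps(3)] by simp
qed

lemma chain_minus_dR_scaled_euler_contraction:
  assumes F: "is_chain n P F"
  shows "F v - dR (\<lambda>w. scale (inverse (of_nat (length w))) (euler_contraction F w)) v =
    scale (inverse (of_nat (length v))) (euler_contraction (dR F) v)"
proof (cases "v = []")
  case True
  then have "F v = 0"
    using F P_0 unfolding is_chain_def by (metis list.size(3) singletonD)
  with True show ?thesis
    by (simp add: dR_altdef euler_contraction_def odd_positions_def even_positions_def)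
next
  case False
  let ?c = "inverse (of_nat (length v)) :: rat"
  have "dR (euler_contraction F) v + euler_contraction (dR F) v = scale (of_nat (length v)) (F v)"
    unfolding cartan_formula by (rule sum_lessThan_const_eq_scale)
  then have "scale ?c (dR (euler_contraction F) v) = F v - scale ?c (euler_contraction (dR F) v)"
    using False by (simp add: eq_diff_eq scale_right_diff_distrib flip: scale_right_distrib)
  moreover have "dR (\<lambda>w. scale (inverse (of_nat (length w))) (euler_contraction F w)) v =
      scale ?c (dR (euler_contraction F) v)"
    by (simp add: dR_altdef signed_scale scale_sum_right)
  ultimately show ?thesis
    by simp
qed

end

theorem lemma6p2:
  fixes scale :: "rat \<Rightarrow> 'a::ab_group_add \<Rightarrow> 'a"
    and P :: "nat \<Rightarrow> 'a set"
    and act :: "nat \<Rightarrow> (nat \<Rightarrow> nat) \<Rightarrow> 'a \<Rightarrow> 'a"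
    and n k :: nat
    and F :: "'a chain"
  assumes "species scale P act"
    and "n \<ge> 1"
    and "F \<in> chain_deg n P k"
    and "dR F \<in> coinv_rel scale act n P"
  shows "if k = 0 then F \<in> coinv_rel scale act n P
         else (\<exists>G \<in> chain_deg n P (k - 1). (\<lambda>w. F w - dR G w) \<in> coinv_rel scale act n P)"
proof -
  interpret species_structure scale P act
    by (rule species_structure.intro) (fact assms(1))
  have F: "is_chain n P F"
    using assms(3) by (simp add: chain_deg_def)
  define G where "G = (\<lambda>w. scale (inverse (of_nat (length w))) (euler_contraction F w))"
  have "(\<lambda>w. F w - dR G w) = (\<lambda>w. scale (inverse (of_nat (length w))) (euler_contraction (dR F) w))"
    unfolding G_def chain_minus_dR_scaled_euler_contraction[OF F] ..
  then have exact: "(\<lambda>w. F w - dR G w) \<in> coinv_rel scale act n P"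
    using coinv_rel_scale_by_length[OF coinv_rel_euler_contraction[OF assms(4)]] by simp
  show ?thesis
  proof (cases "k = 0")
    case True
    then have "G = (\<lambda>_. 0)"
      using euler_contraction_chain_deg_0[OF assms(3)[unfolded True]] by (simp add: G_def)
    then show ?thesis
      using exact True by (simp add: dR_altdef)
  next
    case False
    have "G \<in> chain_deg n P (k - 1)"
      unfolding G_def by (rule chain_deg_scale_by_length[OF euler_contraction_chain_deg[OF assms(3)]])
    then show ?thesis
      using exact False by auto
  qed
qed

end
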